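(* Let $(\mathcal V,\{C_n\}_n,e)$ be an operator system and let $p\in\mathcal V$ be a nonzero positive contraction ($0\le p\le e$). Then $\alpha_m(p)=1$ if and only if $p\notin J_p$.
   Context: $\alpha_m(x)=\sup\{|\varphi(x)|:\varphi\text{ a state on }\mathcal V\}$ is the minimal order norm. $C(p)=\{x\in\mathcal V: x=x^*,\ \forall\epsilon>0\ \exists t>0\text{ such that } x+\epsilon p+t(e-p)\in C_1\}$ and $J_p=\operatorname{span}(C(p)\cap-C(p))$. *)

theory Defs
  imports Complex_Main
begin

text \<open>Matrices over V are modelled as functions nat => nat => 'v; an n x n matrix
  is one whose entries vanish outside the index range {0..<n}.\<close>

definition is_mat :: "nat \<Rightarrow> (nat \<Rightarrow> nat \<Rightarrow> 'v::zero) \<Rightarrow> bool" where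
  "is_mat n X \<longleftrightarrow> (\<forall>i j. (n \<le> i \<or> n \<le> j) \<longrightarrow> X i j = 0)"

definition mat_herm :: "('v \<Rightarrow> 'v) \<Rightarrow> nat \<Rightarrow> (nat \<Rightarrow> nat \<Rightarrow> 'v) \<Rightarrow> bool" where
  "mat_herm star n X \<longleftrightarrow> (\<forall>i<n. \<forall>j<n. X j i = star (X i j))"

text \<open>alpha^* X alpha for alpha an n x m scalar matrix and X an n x n matrix over V.\<close>
definition congr_mat :: "(complex \<Rightarrow> 'v \<Rightarrow> 'v) \<Rightarrow> nat \<Rightarrow> nat \<Rightarrow> (nat \<Rightarrow> nat \<Rightarrow> complex)
    \<Rightarrow> (nat \<Rightarrow> nat \<Rightarrow> 'v::ab_group_add) \<Rightarrow> nat \<Rightarrow> nat \<Rightarrow> 'v" where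
  "congr_mat scl n m \<alpha> X = (\<lambda>i j. if i < m \<and> j < m
      then (\<Sum>k<n. \<Sum>l<n. scl (cnj (\<alpha> k i) * \<alpha> l j) (X k l)) else 0)"

definition diag_e :: "nat \<Rightarrow> 'v::zero \<Rightarrow> nat \<Rightarrow> nat \<Rightarrow> 'v" where
  "diag_e n e = (\<lambda>i j. if i < n \<and> i = j then e else 0)"

text \<open>Operator system (V, {C_n}, e): a complex *-vector space with a matrix ordering
  (proper cones of hermitian matrices, compatible under alpha^* . alpha) for which e is
  an Archimedean matrix order unit.\<close>
definition operator_system :: "(complex \<Rightarrow> 'v::ab_group_add \<Rightarrow> 'v) \<Rightarrow> ('v \<Rightarrow> 'v)
    \<Rightarrow> (nat \<Rightarrow> (nat \<Rightarrow> nat \<Rightarrow> 'v) set) \<Rightarrow> 'v \<Rightarrow> bool" where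
  "operator_system scl star C e \<longleftrightarrow>
     vector_space scl \<and>
     (\<forall>x. star (star x) = x) \<and>
     (\<forall>x y. star (x + y) = star x + star y) \<and>
     (\<forall>c x. star (scl c x) = scl (cnj c) (star x)) \<and>
     star e = e \<and>
     (\<forall>n\<ge>1. C n \<subseteq> {X. is_mat n X \<and> mat_herm star n X}) \<and>
     (\<forall>n\<ge>1. \<forall>X\<in>C n. \<forall>Y\<in>C n. (\<lambda>i j. X i j + Y i j) \<in> C n) \<and>
     (\<forall>n\<ge>1. \<forall>X\<in>C n. \<forall>t::real. 0 \<le> t \<longrightarrow> (\<lambda>i j. scl (complex_of_real t) (X i j)) \<in> C n) \<and>
     (\<forall>n\<ge>1. \<forall>X\<in>C n. (\<lambda>i j. - X i j) \<in> C n \<longrightarrow> X = (\<lambda>i j. 0)) \<and>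
     (\<forall>n\<ge>1. \<forall>m\<ge>1. \<forall>\<alpha>. \<forall>X\<in>C n. congr_mat scl n m \<alpha> X \<in> C m) \<and>
     (\<forall>n\<ge>1. \<forall>X. is_mat n X \<and> mat_herm star n X \<longrightarrow>
        (\<exists>r::real>0. (\<lambda>i j. scl (complex_of_real r) (diag_e n e i j) + X i j) \<in> C n)) \<and>
     (\<forall>n\<ge>1. \<forall>X. is_mat n X \<and> mat_herm star n X \<and>
        (\<forall>r::real>0. (\<lambda>i j. scl (complex_of_real r) (diag_e n e i j) + X i j) \<in> C n)
        \<longrightarrow> X \<in> C n)"

definition mat1 :: "'v::zero \<Rightarrow> nat \<Rightarrow> nat \<Rightarrow> 'v" where
  "mat1 x = (\<lambda>i j. if i = 0 \<and> j = 0 then x else 0)"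

text \<open>x belongs to C_1 (identifying V with M_1(V)).\<close>
definition pos1 :: "(nat \<Rightarrow> (nat \<Rightarrow> nat \<Rightarrow> 'v::zero) set) \<Rightarrow> 'v \<Rightarrow> bool" where
  "pos1 C x \<longleftrightarrow> mat1 x \<in> C 1"

definition is_state :: "(complex \<Rightarrow> 'v::ab_group_add \<Rightarrow> 'v) \<Rightarrow> (nat \<Rightarrow> (nat \<Rightarrow> nat \<Rightarrow> 'v) set)
    \<Rightarrow> 'v \<Rightarrow> ('v \<Rightarrow> complex) \<Rightarrow> bool" where
  "is_state scl C e \<phi> \<longleftrightarrow> Vector_Spaces.linear scl (*) \<phi> \<and>
     (\<forall>x. pos1 C x \<longrightarrow> \<phi> x \<in> \<real> \<and> 0 \<le> Re (\<phi> x)) \<and> \<phi> e = 1"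

definition alpha_m :: "(complex \<Rightarrow> 'v::ab_group_add \<Rightarrow> 'v) \<Rightarrow> (nat \<Rightarrow> (nat \<Rightarrow> nat \<Rightarrow> 'v) set)
    \<Rightarrow> 'v \<Rightarrow> 'v \<Rightarrow> real" where
  "alpha_m scl C e x = Sup {cmod (\<phi> x) | \<phi>. is_state scl C e \<phi>}"

definition Cp :: "(complex \<Rightarrow> 'v::ab_group_add \<Rightarrow> 'v) \<Rightarrow> ('v \<Rightarrow> 'v)
    \<Rightarrow> (nat \<Rightarrow> (nat \<Rightarrow> nat \<Rightarrow> 'v) set) \<Rightarrow> 'v \<Rightarrow> 'v \<Rightarrow> 'v set" where
  "Cp scl star C e p = {x. star x = x \<and> (\<forall>\<epsilon>::real>0. \<exists>t::real>0.
      pos1 C (x + scl (complex_of_real \<epsilon>) p + scl (complex_of_real t) (e - p)))}"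

definition Jp :: "(complex \<Rightarrow> 'v::ab_group_add \<Rightarrow> 'v) \<Rightarrow> ('v \<Rightarrow> 'v)
    \<Rightarrow> (nat \<Rightarrow> (nat \<Rightarrow> nat \<Rightarrow> 'v) set) \<Rightarrow> 'v \<Rightarrow> 'v \<Rightarrow> 'v set" where
  "Jp scl star C e p = module.span scl (Cp scl star C e p \<inter> uminus ` Cp scl star C e p)"

end

theory Submission
  imports Defs
begin

text \<open>If \<open>p \<notin> J_p\<close>, then \<open>-p \<notin> C(p)\<close>, so \<open>C(p)\<close> is a cone in the hermitian part with
  order unit \<open>p\<close>, and Krein's Zorn-lemma extension argument yields a real functional that is
  nonnegative on \<open>C(p)\<close> and equals 1 at \<open>p\<close>. As both \<open>e - p\<close> and \<open>p - e\<close> lie in \<open>C(p)\<close>,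
  this functional is unital, and its complexification is a state \<open>\<phi>\<close> with \<open>\<phi> p = 1\<close>.
  Conversely, the elements \<open>y\<close> with \<open>|\<phi> y| \<le> \<epsilon> + M\<^sub>\<epsilon> (1 - \<phi> p)\<close> for all states
  form a subspace containing \<open>C(p) \<inter> -C(p)\<close>, hence \<open>J_p\<close>. For \<open>y = p\<close> and \<open>\<epsilon> = 1/2\<close> this
  bounds every \<open>\<phi> p\<close> by \<open>(M + 1/2) / (M + 1) < 1\<close>.\<close>

section \<open>Positive functionals on a cone with an order unit\<close>

locale order_unit_cone = vector_space sm
  for sm :: "real \<Rightarrow> 'v::ab_group_add \<Rightarrow> 'v" +
  fixes H K :: "'v set" and u :: 'v
  assumes subspace_H: "subspace H"
    and cone_subset: "K \<subseteq> H"
    and cone_add: "x \<in> K \<Longrightarrow> y \<in> K \<Longrightarrow> x + y \<in> K"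
    and cone_scale: "x \<in> K \<Longrightarrow> 0 \<le> a \<Longrightarrow> sm a x \<in> K"
    and unit_in_H: "u \<in> H"
    and order_unit: "x \<in> H \<Longrightarrow> \<exists>r. sm r u - x \<in> K"
    and neg_unit_notin_cone: "- u \<notin> K"
begin

lemma unit_nonzero: "u \<noteq> 0"
proof
  assume "u = 0"
  then obtain r where "sm r u - 0 \<in> K"
    using order_unit subspace_0[OF subspace_H] by blast
  with \<open>u = 0\<close> neg_unit_notin_cone show False by simp
qed

lemma nonneg_if_scale_unit_in_cone:
  assumes "sm a u \<in> K" shows "0 \<le> a"
proof (rule ccontr)
  assume "\<not> 0 \<le> a"
  then have "sm (- 1 / a * a) u \<in> K"
    using cone_scale[OF assms, of "- 1 / a"] by simp
  with \<open>\<not> 0 \<le> a\<close> neg_unit_notin_cone show False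
    by (simp add: scale_minus_left)
qed

text \<open>Graphs of real-linear functionals defined on a subspace of \<open>H\<close>, nonnegative on \<open>K\<close>
  and taking the value 1 at \<open>u\<close>; Zorn's lemma is applied to them ordered by inclusion.\<close>

definition positive_graph :: "('v \<times> real) set \<Rightarrow> bool" where
  "positive_graph G \<longleftrightarrow> (\<forall>x a. (x, a) \<in> G \<longrightarrow> x \<in> H)
    \<and> (\<forall>x a b. (x, a) \<in> G \<longrightarrow> (x, b) \<in> G \<longrightarrow> a = b)
    \<and> (\<forall>x a y b. (x, a) \<in> G \<longrightarrow> (y, b) \<in> G \<longrightarrow> (x + y, a + b) \<in> G)
    \<and> (\<forall>x a r. (x, a) \<in> G \<longrightarrow> (sm r x, r * a) \<in> G)
    \<and> (u, 1) \<in> G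
    \<and> (\<forall>x a. (x, a) \<in> G \<longrightarrow> x \<in> K \<longrightarrow> 0 \<le> a)"

lemma
  assumes "positive_graph G"
  shows positive_graph_in_H: "(x, a) \<in> G \<Longrightarrow> x \<in> H"
    and positive_graph_unique: "(x, a) \<in> G \<Longrightarrow> (x, b) \<in> G \<Longrightarrow> a = b"
    and positive_graph_add: "(x, a) \<in> G \<Longrightarrow> (y, b) \<in> G \<Longrightarrow> (x + y, a + b) \<in> G"
    and positive_graph_scale: "(x, a) \<in> G \<Longrightarrow> (sm r x, r * a) \<in> G"
    and positive_graph_unit: "(u, 1) \<in> G"
    and positive_graph_nonneg: "(x, a) \<in> G \<Longrightarrow> x \<in> K \<Longrightarrow> 0 \<le> a"
  using assms unfolding positive_graph_def by blast+

lemma positive_graph_diff: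
  assumes "positive_graph G" "(x, a) \<in> G" "(y, b) \<in> G"
  shows "(x - y, a - b) \<in> G"
  using positive_graph_add[OF assms(1,2) positive_graph_scale[OF assms(1,3), of "- 1"]]
  by simp

lemma positive_graph_unit_line: "positive_graph (range (\<lambda>r. (sm r u, r)))"
  unfolding positive_graph_def
proof (intro conjI allI impI)
  show "(u, 1) \<in> range (\<lambda>r. (sm r u, r))"
    by (auto intro: image_eqI[of _ _ 1])
next
  fix x a assume "(x, a) \<in> range (\<lambda>r. (sm r u, r))"
  then show "x \<in> H" using subspace_scale[OF subspace_H unit_in_H] by auto
next
  fix x a b
  assume "(x, a) \<in> range (\<lambda>r. (sm r u, r))" "(x, b) \<in> range (\<lambda>r. (sm r u, r))"
  then show "a = b" using unit_nonzero by auto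
next
  fix x a y b
  assume "(x, a) \<in> range (\<lambda>r. (sm r u, r))" "(y, b) \<in> range (\<lambda>r. (sm r u, r))"
  then show "(x + y, a + b) \<in> range (\<lambda>r. (sm r u, r))"
    by (auto simp: scale_left_distrib[symmetric])
next
  fix x a r
  assume "(x, a) \<in> range (\<lambda>r. (sm r u, r))"
  then show "(sm r x, r * a) \<in> range (\<lambda>r. (sm r u, r))" by auto
next
  fix x a
  assume "(x, a) \<in> range (\<lambda>r. (sm r u, r))" "x \<in> K"
  then show "0 \<le> a" using nonneg_if_scale_unit_in_cone by auto
qed

lemma positive_graph_Union:
  assumes "\<C> \<noteq> {}" and chain: "subset.chain {G. positive_graph G} \<C>"
  shows "positive_graph (\<Union>\<C>)"
proof -
  have graphs: "positive_graph G" if "G \<in> \<C>" for G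
    using chain that by (auto simp: subset_chain_def)
  have common: "\<exists>G\<in>\<C>. z \<in> G \<and> z' \<in> G" if "z \<in> \<Union>\<C>" "z' \<in> \<Union>\<C>" for z z'
    using chain that unfolding subset_chain_def by blast
  show ?thesis
    unfolding positive_graph_def
  proof (intro conjI allI impI)
    show "(u, 1) \<in> \<Union>\<C>"
      using assms(1) graphs positive_graph_unit by blast
  next
    fix x a assume "(x, a) \<in> \<Union>\<C>"
    then show "x \<in> H"
      using graphs positive_graph_in_H by blast
  next
    fix x a b assume "(x, a) \<in> \<Union>\<C>" "(x, b) \<in> \<Union>\<C>"
    then obtain G where "G \<in> \<C>" "(x, a) \<in> G" "(x, b) \<in> G"
      using common by blast
    then show "a = b"
      using graphs positive_graph_unique by blast
  next
    fix x a y b assume "(x, a) \<in> \<Union>\<C>" "(y, b) \<in> \<Union>\<C>"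
    then obtain G where "G \<in> \<C>" "(x, a) \<in> G" "(y, b) \<in> G"
      using common by blast
    then show "(x + y, a + b) \<in> \<Union>\<C>"
      using graphs positive_graph_add by blast
  next
    fix x a r assume "(x, a) \<in> \<Union>\<C>"
    then show "(sm r x, r * a) \<in> \<Union>\<C>"
      using graphs positive_graph_scale by blast
  next
    fix x a assume "(x, a) \<in> \<Union>\<C>" "x \<in> K"
    then show "0 \<le> a"
      using graphs positive_graph_nonneg by blast
  qed
qed

definition graph_extension :: "('v \<times> real) set \<Rightarrow> 'v \<Rightarrow> real \<Rightarrow> ('v \<times> real) set" where
  "graph_extension G x0 c = {(m + sm l x0, a + l * c) | m a l. (m, a) \<in> G}"

lemma separating_value_exists:
  assumes G: "positive_graph G" and "x0 \<in> H"
  obtains c where "\<And>m a. (m, a) \<in> G \<Longrightarrow> x0 - m \<in> K \<Longrightarrow> a \<le> c"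
    and "\<And>m a. (m, a) \<in> G \<Longrightarrow> m - x0 \<in> K \<Longrightarrow> c \<le> a"
proof -
  define L where "L = {a. \<exists>m. (m, a) \<in> G \<and> x0 - m \<in> K}"
  define U where "U = {a. \<exists>m. (m, a) \<in> G \<and> m - x0 \<in> K}"
  have L_le_U: "a \<le> b" if ab: "a \<in> L" "b \<in> U" for a b
  proof -
    obtain m m' where "(m, a) \<in> G" "x0 - m \<in> K" "(m', b) \<in> G" "m' - x0 \<in> K"
      using ab unfolding L_def U_def by blast
    then have "(m' - m, b - a) \<in> G" "m' - m \<in> K"
      using positive_graph_diff[OF G] cone_add[of "m' - x0" "x0 - m"] by auto
    then show ?thesis
      using positive_graph_nonneg[OF G] by fastforce
  qed
  have unit_line: "(sm r u, r) \<in> G" for r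
    using positive_graph_scale[OF G positive_graph_unit[OF G]] by simp
  obtain r where "sm r u - (- x0) \<in> K"
    using order_unit subspace_neg[OF subspace_H \<open>x0 \<in> H\<close>] by blast
  then have "- r \<in> L"
    using unit_line[of "- r"] unfolding L_def by (auto simp: scale_minus_left add.commute)
  obtain s where "sm s u - x0 \<in> K"
    using order_unit \<open>x0 \<in> H\<close> by blast
  then have "s \<in> U"
    using unit_line[of s] unfolding U_def by auto
  show ?thesis
  proof
    show "a \<le> Sup L" if "(m, a) \<in> G" "x0 - m \<in> K" for m a
      using that L_le_U \<open>s \<in> U\<close> by (intro cSup_upper) (auto simp: L_def bdd_above_def)
    show "Sup L \<le> a" if "(m, a) \<in> G" "m - x0 \<in> K" for m a
      using that L_le_U \<open>- r \<in> L\<close> by (intro cSup_least) (auto simp: U_def)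
  qed
qed

lemma graph_extension_unique:
  assumes G: "positive_graph G" and "x0 \<notin> fst ` G"
    and "(x, a) \<in> graph_extension G x0 c" "(x, b) \<in> graph_extension G x0 c"
  shows "a = b"
proof -
  obtain m a' l m' b' l'
    where x: "x = m + sm l x0" "x = m' + sm l' x0"
      and ab: "a = a' + l * c" "b = b' + l' * c"
      and in_G: "(m, a') \<in> G" "(m', b') \<in> G"
    using assms(3,4) unfolding graph_extension_def by blast
  have "l = l'"
  proof (rule ccontr)
    assume "l \<noteq> l'"
    have "sm (l - l') x0 = m' - m"
      using x by (simp add: scale_left_diff_distrib algebra_simps)
    then have "sm (1 / (l - l')) (m' - m) = sm (1 / (l - l') * (l - l')) x0"
      by (metis scale_scale)
    then have "x0 = sm (1 / (l - l')) (m' - m)"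
      using \<open>l \<noteq> l'\<close> by simp
    moreover have "(sm (1 / (l - l')) (m' - m), 1 / (l - l') * (b' - a')) \<in> G"
      using positive_graph_scale[OF G positive_graph_diff[OF G in_G(2,1)]] .
    ultimately show False
      using assms(2) by force
  qed
  with x have "m = m'" by simp
  with \<open>l = l'\<close> ab in_G show "a = b"
    using positive_graph_unique[OF G] by blast
qed

lemma graph_extension_nonneg:
  assumes G: "positive_graph G"
    and below: "\<And>m a. (m, a) \<in> G \<Longrightarrow> x0 - m \<in> K \<Longrightarrow> a \<le> c"
    and above: "\<And>m a. (m, a) \<in> G \<Longrightarrow> m - x0 \<in> K \<Longrightarrow> c \<le> a"
    and "(x, a) \<in> graph_extension G x0 c" "x \<in> K"
  shows "0 \<le> a"
proof -
  obtain m a' l where x: "x = m + sm l x0" "a = a' + l * c" "(m, a') \<in> G"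
    using assms(4) unfolding graph_extension_def by blast
  have scaled: "(sm (- 1 / l) m, - 1 / l * a') \<in> G"
    using positive_graph_scale[OF G x(3)] .
  consider "l = 0" | "l > 0" | "l < 0" by linarith
  then show ?thesis
  proof cases
    case 1
    then show ?thesis using x \<open>x \<in> K\<close> positive_graph_nonneg[OF G] by simp
  next
    case 2
    have "x0 - sm (- 1 / l) m = sm (1 / l) x"
      using x(1) 2 by (simp add: scale_right_distrib scale_minus_left)
    also have "\<dots> \<in> K"
      using \<open>x \<in> K\<close> 2 by (simp add: cone_scale)
    finally have "- 1 / l * a' \<le> c"
      using below[OF scaled] by blast
    then show ?thesis
      using x(2) 2 by (simp add: field_simps)
  next
    case 3
    have "sm (- 1 / l) m - x0 = sm (- 1 / l) x"
      using x(1) 3 by (simp add: scale_right_distrib)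
    also have "\<dots> \<in> K"
      using cone_scale[OF \<open>x \<in> K\<close>, of "- 1 / l"] 3 by simp
    finally have "c \<le> - 1 / l * a'"
      using above[OF scaled] by blast
    then show ?thesis
      using x(2) 3 by (simp add: field_simps)
  qed
qed

lemma positive_graph_extension:
  assumes G: "positive_graph G" and "x0 \<in> H" "x0 \<notin> fst ` G"
    and "\<And>m a. (m, a) \<in> G \<Longrightarrow> x0 - m \<in> K \<Longrightarrow> a \<le> c"
    and "\<And>m a. (m, a) \<in> G \<Longrightarrow> m - x0 \<in> K \<Longrightarrow> c \<le> a"
  shows "positive_graph (graph_extension G x0 c)"
  unfolding positive_graph_def
proof (intro conjI allI impI)
  fix x a assume "(x, a) \<in> graph_extension G x0 c"
  then show "x \<in> H"
    unfolding graph_extension_def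
    using positive_graph_in_H[OF G] \<open>x0 \<in> H\<close> subspace_H
    by (auto intro!: subspace_add subspace_scale)
next
  fix x a y b
  assume "(x, a) \<in> graph_extension G x0 c" "(y, b) \<in> graph_extension G x0 c"
  then obtain m a' l m' b' l'
    where x: "x = m + sm l x0" "a = a' + l * c" "(m, a') \<in> G"
      and y: "y = m' + sm l' x0" "b = b' + l' * c" "(m', b') \<in> G"
    unfolding graph_extension_def by blast
  have "x + y = (m + m') + sm (l + l') x0" "a + b = (a' + b') + (l + l') * c"
    using x y by (simp_all add: scale_left_distrib algebra_simps)
  moreover have "(m + m', a' + b') \<in> G"
    using positive_graph_add[OF G x(3) y(3)] .
  ultimately show "(x + y, a + b) \<in> graph_extension G x0 c"
    unfolding graph_extension_def by blast
next
  fix x a r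
  assume "(x, a) \<in> graph_extension G x0 c"
  then obtain m a' l where x: "x = m + sm l x0" "a = a' + l * c" "(m, a') \<in> G"
    unfolding graph_extension_def by blast
  have "sm r x = sm r m + sm (r * l) x0" "r * a = r * a' + (r * l) * c"
    using x by (simp_all add: scale_right_distrib algebra_simps)
  moreover have "(sm r m, r * a') \<in> G"
    using positive_graph_scale[OF G x(3)] .
  ultimately show "(sm r x, r * a) \<in> graph_extension G x0 c"
    unfolding graph_extension_def by blast
next
  show "(u, 1) \<in> graph_extension G x0 c"
    unfolding graph_extension_def using positive_graph_unit[OF G]
    by (intro CollectI exI[of _ u] exI[of _ 1] exI[of _ 0]) simp
qed (use assms graph_extension_unique graph_extension_nonneg in blast)+

lemma graph_extension_extends:
  assumes "positive_graph G"
  shows "G \<subseteq> graph_extension G x0 c" and "(x0, c) \<in> graph_extension G x0 c"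
proof -
  show "G \<subseteq> graph_extension G x0 c"
  proof (rule subrelI)
    fix m a assume "(m, a) \<in> G"
    then show "(m, a) \<in> graph_extension G x0 c"
      unfolding graph_extension_def
      by (intro CollectI exI[of _ m] exI[of _ a] exI[of _ 0]) simp
  qed
  have "(0, 0) \<in> G"
    using positive_graph_scale[OF assms positive_graph_unit[OF assms], of 0] by simp
  then show "(x0, c) \<in> graph_extension G x0 c"
    unfolding graph_extension_def
    by (intro CollectI exI[of _ 0] exI[of _ 0] exI[of _ 1]) simp
qed

lemma maximal_positive_graph_total:
  assumes M: "positive_graph M"
    and maximal: "\<And>G. positive_graph G \<Longrightarrow> M \<subseteq> G \<Longrightarrow> G = M"
    and "x \<in> H"
  shows "\<exists>a. (x, a) \<in> M"
proof (rule ccontr)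
  assume "\<nexists>a. (x, a) \<in> M"
  then have "x \<notin> fst ` M" by force
  obtain c where "\<And>m a. (m, a) \<in> M \<Longrightarrow> x - m \<in> K \<Longrightarrow> a \<le> c"
    and "\<And>m a. (m, a) \<in> M \<Longrightarrow> m - x \<in> K \<Longrightarrow> c \<le> a"
    using separating_value_exists[OF M \<open>x \<in> H\<close>] by blast
  then have "graph_extension M x c = M"
    using maximal positive_graph_extension[OF M \<open>x \<in> H\<close> \<open>x \<notin> fst ` M\<close>]
      graph_extension_extends(1)[OF M] by blast
  then show False
    using graph_extension_extends(2)[OF M] \<open>\<nexists>a. (x, a) \<in> M\<close> by blast
qed

theorem positive_functional_exists:
  obtains f :: "'v \<Rightarrow> real"
  where "\<And>x y. x \<in> H \<Longrightarrow> y \<in> H \<Longrightarrow> f (x + y) = f x + f y"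
    and "\<And>x r. x \<in> H \<Longrightarrow> f (sm r x) = r * f x"
    and "\<And>x. x \<in> K \<Longrightarrow> 0 \<le> f x"
    and "f u = 1"
proof -
  obtain M where M: "positive_graph M"
    and maximal: "\<And>G. positive_graph G \<Longrightarrow> M \<subseteq> G \<Longrightarrow> G = M"
    using subset_Zorn_nonempty[of "{G. positive_graph G}"]
      positive_graph_unit_line positive_graph_Union by blast
  define f where "f x = (THE a. (x, a) \<in> M)" for x
  have f_eq: "f x = a" if "(x, a) \<in> M" for x a
    unfolding f_def using that positive_graph_unique[OF M] by blast
  have in_M: "(x, f x) \<in> M" if "x \<in> H" for x
    using maximal_positive_graph_total[OF M maximal that] f_eq by blast
  show ?thesis
  proof
    show "f (x + y) = f x + f y" if "x \<in> H" "y \<in> H" for x y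
      using f_eq positive_graph_add[OF M in_M in_M] that by blast
    show "f (sm r x) = r * f x" if "x \<in> H" for x r
      using f_eq positive_graph_scale[OF M in_M] that by blast
    show "0 \<le> f x" if "x \<in> K" for x
      using positive_graph_nonneg[OF M in_M] that cone_subset by blast
    show "f u = 1"
      using f_eq positive_graph_unit[OF M] by blast
  qed
qed

end

section \<open>States of an order unit *-space\<close>

lemma mat1_map: "f 0 = 0 \<Longrightarrow> (\<lambda>i j. f (mat1 x i j)) = mat1 (f x)"
  unfolding mat1_def by (auto intro!: ext)

lemma mat1_map2: "f 0 0 = 0 \<Longrightarrow> (\<lambda>i j. f (mat1 x i j) (mat1 y i j)) = mat1 (f x y)"
  unfolding mat1_def by (auto intro!: ext)

lemma mat1_zero: "mat1 0 = (\<lambda>i j. 0)"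
  unfolding mat1_def by auto

lemma mat1_inject: "mat1 x = mat1 y \<longleftrightarrow> x = y"
  unfolding mat1_def by metis

lemma diag_e_one: "diag_e 1 x = mat1 x"
  unfolding diag_e_def mat1_def by (auto intro!: ext)

lemma is_mat_mat1: "is_mat 1 (mat1 x)"
  unfolding is_mat_def mat1_def by auto

lemma mat_herm_mat1: "mat_herm star 1 (mat1 x) \<longleftrightarrow> star x = x"
  unfolding mat_herm_def mat1_def by auto

text \<open>Only the first matrix level of an operator system is needed: a complex vector space with
  an involution, a cone \<open>pos1 C\<close> of hermitian elements and an order unit \<open>e\<close>.\<close>

locale order_unit_star_space = vector_space scl
  for scl :: "complex \<Rightarrow> 'v::ab_group_add \<Rightarrow> 'v" +
  fixes star :: "'v \<Rightarrow> 'v" and C :: "nat \<Rightarrow> (nat \<Rightarrow> nat \<Rightarrow> 'v) set" and e :: 'v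
  assumes star_star: "star (star x) = x"
    and star_add: "star (x + y) = star x + star y"
    and star_scale: "star (scl c x) = scl (cnj c) (star x)"
    and star_unit: "star e = e"
    and pos1_hermitian: "pos1 C x \<Longrightarrow> star x = x"
    and pos1_add: "pos1 C x \<Longrightarrow> pos1 C y \<Longrightarrow> pos1 C (x + y)"
    and pos1_scale: "pos1 C x \<Longrightarrow> 0 \<le> t \<Longrightarrow> pos1 C (scl (complex_of_real t) x)"
    and pos1_antisym: "pos1 C x \<Longrightarrow> pos1 C (- x) \<Longrightarrow> x = 0"
    and pos1_order_unit: "star x = x \<Longrightarrow> \<exists>r>0. pos1 C (scl (complex_of_real r) e + x)"

lemma operator_system_order_unit_star_space:
  assumes "operator_system scl star C e"
  shows "order_unit_star_space scl star C e"
  using assms unfolding operator_system_def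
proof (elim conjE)
  assume "vector_space scl"
    and star: "\<forall>x. star (star x) = x" "\<forall>x y. star (x + y) = star x + star y"
      "\<forall>c x. star (scl c x) = scl (cnj c) (star x)" "star e = e"
    and herm: "\<forall>n\<ge>1. C n \<subseteq> {X. is_mat n X \<and> mat_herm star n X}"
    and add: "\<forall>n\<ge>1. \<forall>X\<in>C n. \<forall>Y\<in>C n. (\<lambda>i j. X i j + Y i j) \<in> C n"
    and scale: "\<forall>n\<ge>1. \<forall>X\<in>C n. \<forall>t::real. 0 \<le> t \<longrightarrow> (\<lambda>i j. scl (complex_of_real t) (X i j)) \<in> C n"
    and proper: "\<forall>n\<ge>1. \<forall>X\<in>C n. (\<lambda>i j. - X i j) \<in> C n \<longrightarrow> X = (\<lambda>i j. 0)"
    and unit: "\<forall>n\<ge>1. \<forall>X. is_mat n X \<and> mat_herm star n X \<longrightarrow>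
        (\<exists>r::real>0. (\<lambda>i j. scl (complex_of_real r) (diag_e n e i j) + X i j) \<in> C n)"
  interpret vector_space scl by fact
  show ?thesis
  proof
    show "star (star x) = x" "star (x + y) = star x + star y"
      "star (scl c x) = scl (cnj c) (star x)" "star e = e" for x y c
      using star by simp_all
    show "star x = x" if "pos1 C x" for x
    proof -
      have "mat_herm star 1 (mat1 x)"
        using herm[rule_format, of 1] that unfolding pos1_def by blast
      then show ?thesis unfolding mat_herm_mat1 .
    qed
    show "pos1 C (x + y)" if "pos1 C x" "pos1 C y" for x y
      using add[rule_format, of 1 "mat1 x" "mat1 y"] that mat1_map2[of "(+)" x y] unfolding pos1_def by simp
    show "pos1 C (scl (complex_of_real t) x)" if "pos1 C x" "0 \<le> t" for x t
      using scale[rule_format, of 1 "mat1 x" t] that mat1_map[of "scl (complex_of_real t)" x] unfolding pos1_def by simp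
    show "x = 0" if "pos1 C x" "pos1 C (- x)" for x
      using proper[rule_format, of 1 "mat1 x"] that mat1_map[of uminus x] unfolding pos1_def
      by (simp add: mat1_zero[symmetric] mat1_inject)
    show "\<exists>r>0. pos1 C (scl (complex_of_real r) e + x)" if "star x = x" for x
    proof -
      have "is_mat 1 (mat1 x) \<and> mat_herm star 1 (mat1 x)"
        using that unfolding mat_herm_mat1 by (intro conjI is_mat_mat1)
      then obtain r :: real where "r > 0"
        "(\<lambda>i j. scl (complex_of_real r) (diag_e 1 e i j) + mat1 x i j) \<in> C 1"
        using unit by blast
      then show ?thesis
        using mat1_map2[of "\<lambda>a b. scl (complex_of_real r) a + b" e x]
        unfolding pos1_def diag_e_one by auto
    qed
  qed
qed

context order_unit_star_space
begin

abbreviation rscl :: "real \<Rightarrow> 'v \<Rightarrow> 'v" where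
  "rscl r \<equiv> scl (complex_of_real r)"

abbreviation hermitian :: "'v set" where
  "hermitian \<equiv> {x. star x = x}"

lemma star_zero: "star 0 = 0"
  using star_scale[of 0 0] by simp

lemma star_minus: "star (- x) = - star x"
  using star_scale[of "- 1" x] by (simp add: scale_minus_left)

lemma star_diff: "star (x - y) = star x - star y"
  using star_add[of x "- y"] by (simp add: star_minus)

lemma star_rscl: "star (rscl r x) = rscl r (star x)"
  by (simp add: star_scale)

lemma order_unit_cone_hermitianI:
  assumes "K \<subseteq> hermitian"
    and "\<And>x y. x \<in> K \<Longrightarrow> y \<in> K \<Longrightarrow> x + y \<in> K"
    and "\<And>x a. x \<in> K \<Longrightarrow> 0 \<le> a \<Longrightarrow> rscl a x \<in> K"
    and "star u = u"
    and "\<And>x. star x = x \<Longrightarrow> \<exists>r. rscl r u - x \<in> K"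
    and "- u \<notin> K"
  shows "order_unit_cone rscl hermitian K u"
proof -
  interpret real: vector_space rscl
    by unfold_locales (simp_all add: scale_right_distrib scale_left_distrib[symmetric])
  show ?thesis
  proof (intro order_unit_cone.intro order_unit_cone_axioms.intro)
    show "vector_space rscl"
      by (rule real.vector_space_axioms)
    show "real.subspace hermitian"
      unfolding real.subspace_def by (simp add: star_zero star_add star_rscl)
  qed (use assms in auto)
qed

text \<open>\<open>2 x = twice_re x + \<i> twice_im x\<close> with both parts hermitian, so a real functional
  on the hermitian part extends uniquely to a complex-linear one.\<close>

definition twice_re :: "'v \<Rightarrow> 'v" where
  "twice_re x = x + star x"

definition twice_im :: "'v \<Rightarrow> 'v" where
  "twice_im x = scl \<i> (star x - x)"

lemma twice_re_hermitian: "star (twice_re x) = twice_re x"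
  unfolding twice_re_def by (simp add: star_add star_star add.commute)

lemma twice_im_hermitian: "star (twice_im x) = twice_im x"
  unfolding twice_im_def
  by (simp add: star_scale star_diff star_star scale_minus_left scale_right_diff_distrib)

lemma twice_re_add: "twice_re (x + y) = twice_re x + twice_re y"
  unfolding twice_re_def by (simp add: star_add ac_simps)

lemma twice_im_add: "twice_im (x + y) = twice_im x + twice_im y"
  unfolding twice_im_def by (simp add: star_add scale_right_diff_distrib scale_right_distrib)

lemma twice_re_rscl: "twice_re (rscl r x) = rscl r (twice_re x)"
  unfolding twice_re_def by (simp add: star_rscl scale_right_distrib)

lemma twice_im_rscl: "twice_im (rscl r x) = rscl r (twice_im x)"
  unfolding twice_im_def by (simp add: star_rscl scale_right_diff_distrib mult.commute)

lemma twice_re_imag: "twice_re (scl \<i> x) = - twice_im x"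
  unfolding twice_re_def twice_im_def
  by (simp add: star_scale scale_minus_left scale_right_diff_distrib)

lemma twice_im_imag: "twice_im (scl \<i> x) = twice_re x"
  unfolding twice_re_def twice_im_def
  by (simp add: star_scale scale_minus_left scale_right_diff_distrib add.commute)

lemma complex_homogeneous_if_real_and_imaginary:
  fixes \<phi> :: "'v \<Rightarrow> complex"
  assumes add: "\<And>x y. \<phi> (x + y) = \<phi> x + \<phi> y"
    and real: "\<And>r x. \<phi> (rscl r x) = of_real r * \<phi> x"
    and imag: "\<And>x. \<phi> (scl \<i> x) = \<i> * \<phi> x"
  shows "\<phi> (scl c x) = c * \<phi> x"
proof -
  have "scl c x = scl (of_real (Re c) + of_real (Im c) * \<i>) x"
    by (metis complex_eq mult.commute)
  also have "\<dots> = rscl (Re c) x + rscl (Im c) (scl \<i> x)"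
    by (simp only: scale_left_distrib scale_scale)
  finally have "\<phi> (scl c x) = of_real (Re c) * \<phi> x + of_real (Im c) * (\<i> * \<phi> x)"
    by (simp only: add real imag)
  also have "\<dots> = c * \<phi> x"
    by (simp add: complex_eq_iff)
  finally show ?thesis .
qed

lemma state_of_hermitian_functional:
  fixes f :: "'v \<Rightarrow> real"
  assumes add: "\<And>x y. star x = x \<Longrightarrow> star y = y \<Longrightarrow> f (x + y) = f x + f y"
    and real: "\<And>x r. star x = x \<Longrightarrow> f (rscl r x) = r * f x"
    and pos: "\<And>x. pos1 C x \<Longrightarrow> 0 \<le> f x"
    and unit: "f e = 1"
  obtains \<phi> where "is_state scl C e \<phi>" and "\<And>x. star x = x \<Longrightarrow> \<phi> x = of_real (f x)"
proof -
  define \<phi> where "\<phi> x = (of_real (f (twice_re x)) + \<i> * of_real (f (twice_im x))) / 2" for x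
  have f_minus: "f (- x) = - f x" if "star x = x" for x
    using real[OF that, of "- 1"] by (simp add: scale_minus_left)
  have \<phi>_add: "\<phi> (x + y) = \<phi> x + \<phi> y" for x y
    unfolding \<phi>_def twice_re_add twice_im_add
    by (simp add: add twice_re_hermitian twice_im_hermitian add_divide_distrib algebra_simps)
  have \<phi>_real: "\<phi> (rscl r x) = of_real r * \<phi> x" for r x
    unfolding \<phi>_def twice_re_rscl twice_im_rscl
    by (simp add: real twice_re_hermitian twice_im_hermitian algebra_simps)
  have \<phi>_imag: "\<phi> (scl \<i> x) = \<i> * \<phi> x" for x
    unfolding \<phi>_def twice_re_imag twice_im_imag
    by (simp add: f_minus twice_im_hermitian algebra_simps)
  have \<phi>_hermitian: "\<phi> x = of_real (f x)" if "star x = x" for x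
  proof -
    have "f (twice_re x) = 2 * f x"
      using add[OF that that] that unfolding twice_re_def by simp
    moreover have "f (twice_im x) = 0"
      using real[OF that, of 0] that unfolding twice_im_def by simp
    ultimately show ?thesis
      unfolding \<phi>_def by simp
  qed
  have "Vector_Spaces.linear scl (*) \<phi>"
    unfolding Vector_Spaces.linear_iff
  proof (intro conjI allI)
    show "vector_space ((*) :: complex \<Rightarrow> complex \<Rightarrow> complex)"
      by unfold_locales (simp_all add: algebra_simps)
    show "\<phi> (scl c x) = c * \<phi> x" for c x
      using complex_homogeneous_if_real_and_imaginary[OF \<phi>_add \<phi>_real \<phi>_imag] .
  qed (fact vector_space_axioms \<phi>_add)+
  then have "is_state scl C e \<phi>"
    unfolding is_state_def using \<phi>_hermitian pos1_hermitian pos unit star_unit by auto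
  then show ?thesis
    using that \<phi>_hermitian by blast
qed

lemma state_with_value_one:
  assumes "order_unit_cone rscl hermitian K u"
    and "\<And>x. pos1 C x \<Longrightarrow> x \<in> K" and "e - u \<in> K" and "u - e \<in> K"
  obtains \<phi> where "is_state scl C e \<phi>" and "\<phi> u = 1"
proof -
  interpret K: order_unit_cone rscl hermitian K u by fact
  obtain f where add: "\<And>x y. x \<in> hermitian \<Longrightarrow> y \<in> hermitian \<Longrightarrow> f (x + y) = f x + f y"
    and real: "\<And>x r. x \<in> hermitian \<Longrightarrow> f (rscl r x) = r * f x"
    and nonneg: "\<And>x. x \<in> K \<Longrightarrow> 0 \<le> f x" and "f u = 1"
    using K.positive_functional_exists by blast
  have herm: "star u = u" "star (e - u) = e - u"
    using K.unit_in_H K.cone_subset \<open>e - u \<in> K\<close> by auto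
  have "f (u - e) = - f (e - u)"
    using real[of "e - u" "- 1"] herm(2) by (simp add: scale_minus_left)
  then have "f (e - u) = 0"
    using nonneg[OF \<open>e - u \<in> K\<close>] nonneg[OF \<open>u - e \<in> K\<close>] by simp
  then have "f e = 1"
    using add[of u "e - u"] herm \<open>f u = 1\<close> by simp
  then obtain \<phi> where "is_state scl C e \<phi>" "\<And>x. star x = x \<Longrightarrow> \<phi> x = of_real (f x)"
    using state_of_hermitian_functional[of f] add real assms(2) nonneg by auto
  then show ?thesis
    using that herm(1) \<open>f u = 1\<close> by simp
qed

lemma pos1_zero: "pos1 C 0"
  using pos1_order_unit[of 0] pos1_scale[of _ 0] by (auto simp: star_zero)

lemma pos1_unit: "pos1 C e"
proof -
  obtain r where "r > 0" "pos1 C (rscl r e)"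
    using pos1_order_unit[of 0] by (auto simp: star_zero)
  then have "pos1 C (rscl (1 / r) (rscl r e))"
    using pos1_scale[of "rscl r e" "1 / r"] by simp
  with \<open>r > 0\<close> show ?thesis by simp
qed

lemma state_exists:
  assumes "e \<noteq> 0"
  obtains \<phi> where "is_state scl C e \<phi>"
proof -
  have "- e \<notin> {x. pos1 C x}"
    using pos1_antisym pos1_unit assms by auto
  moreover have "\<exists>r. pos1 C (rscl r e - x)" if "star x = x" for x
    using pos1_order_unit[of "- x"] that by (auto simp: star_minus)
  ultimately have "order_unit_cone rscl hermitian {x. pos1 C x} e"
    using pos1_hermitian pos1_add pos1_scale star_unit
    by (intro order_unit_cone_hermitianI) auto
  then show ?thesis
    using state_with_value_one[of "{x. pos1 C x}" e] pos1_zero that by auto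
qed

lemma state_module_hom: "is_state scl C e \<phi> \<Longrightarrow> module_hom scl (*) \<phi>"
  unfolding is_state_def by (simp add: module_hom_iff_linear)

lemma state_nonneg:
  assumes "is_state scl C e \<phi>" "pos1 C x"
  shows "\<phi> x = of_real (Re (\<phi> x))" and "0 \<le> Re (\<phi> x)"
  using assms unfolding is_state_def by (auto simp: complex_is_Real_iff)

lemma state_hermitian_real:
  assumes \<phi>: "is_state scl C e \<phi>" and "star x = x"
  shows "\<phi> x = of_real (Re (\<phi> x))"
proof -
  interpret \<phi>: module_hom scl "(*)" \<phi>
    using state_module_hom[OF \<phi>] .
  obtain r where "pos1 C (rscl r e + x)"
    using pos1_order_unit[OF \<open>star x = x\<close>] by blast
  then have "Im (\<phi> (rscl r e + x)) = 0"
    using state_nonneg(1)[OF \<phi>] by (metis Im_complex_of_real)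
  moreover have "\<phi> (rscl r e + x) = of_real r + \<phi> x"
    using \<phi> unfolding is_state_def by (simp add: \<phi>.add \<phi>.scale)
  ultimately show ?thesis
    by (simp add: complex_eq_iff)
qed

end

section \<open>The cone \<open>C(p)\<close> of a positive contraction\<close>

locale positive_contraction = order_unit_star_space scl star C e
  for scl :: "complex \<Rightarrow> 'v::ab_group_add \<Rightarrow> 'v" and star C e +
  fixes p :: 'v
  assumes pos1_p: "pos1 C p" and pos1_complement: "pos1 C (e - p)"
begin

abbreviation C_p :: "'v set" where
  "C_p \<equiv> Cp scl star C e p"

abbreviation J_p :: "'v set" where
  "J_p \<equiv> Jp scl star C e p"

lemma C_p_iff:
  "x \<in> C_p \<longleftrightarrow> star x = x \<and> (\<forall>\<epsilon>>0. \<exists>t>0. pos1 C (x + rscl \<epsilon> p + rscl t (e - p)))"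
  unfolding Cp_def by simp

lemma pos1_in_C_p:
  assumes "pos1 C x" shows "x \<in> C_p"
  unfolding C_p_iff
proof (intro conjI allI impI exI)
  show "star x = x" using assms by (rule pos1_hermitian)
  fix \<epsilon> :: real assume "\<epsilon> > 0"
  then show "pos1 C (x + rscl \<epsilon> p + rscl 1 (e - p))"
    using assms pos1_p pos1_complement by (simp add: pos1_add pos1_scale)
qed simp

lemma C_p_add:
  assumes "x \<in> C_p" "y \<in> C_p" shows "x + y \<in> C_p"
  unfolding C_p_iff
proof (intro conjI allI impI)
  show "star (x + y) = x + y"
    using assms by (simp add: C_p_iff star_add)
  fix \<epsilon> :: real assume "\<epsilon> > 0"
  then obtain s t where "s > 0" and x: "pos1 C (x + rscl (\<epsilon> / 2) p + rscl s (e - p))"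
    and "t > 0" and y: "pos1 C (y + rscl (\<epsilon> / 2) p + rscl t (e - p))"
    using assms unfolding C_p_iff by (meson half_gt_zero)
  have "pos1 C ((x + rscl (\<epsilon> / 2) p + rscl s (e - p)) + (y + rscl (\<epsilon> / 2) p + rscl t (e - p)))"
    using pos1_add[OF x y] .
  moreover have "(x + rscl (\<epsilon> / 2) p + rscl s (e - p)) + (y + rscl (\<epsilon> / 2) p + rscl t (e - p))
      = x + y + rscl \<epsilon> p + rscl (s + t) (e - p)"
    using scale_left_distrib[of "of_real (\<epsilon> / 2)" "of_real (\<epsilon> / 2)" p]
    by (simp add: algebra_simps)
  ultimately show "\<exists>t>0. pos1 C (x + y + rscl \<epsilon> p + rscl t (e - p))"
    using \<open>s > 0\<close> \<open>t > 0\<close> by (metis add_pos_pos)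
qed

lemma C_p_scale:
  assumes "x \<in> C_p" "0 \<le> a" shows "rscl a x \<in> C_p"
proof (cases "a = 0")
  case True
  then show ?thesis using pos1_in_C_p[OF pos1_zero] by simp
next
  case False
  with assms(2) have "a > 0" by simp
  show ?thesis
    unfolding C_p_iff
  proof (intro conjI allI impI)
    show "star (rscl a x) = rscl a x"
      using assms(1) by (simp add: C_p_iff star_rscl)
    fix \<epsilon> :: real assume "\<epsilon> > 0"
    then obtain t where "t > 0" "pos1 C (x + rscl (\<epsilon> / a) p + rscl t (e - p))"
      using assms(1) \<open>a > 0\<close> unfolding C_p_iff by (meson divide_pos_pos)
    then have "pos1 C (rscl a (x + rscl (\<epsilon> / a) p + rscl t (e - p)))"
      using \<open>a > 0\<close> pos1_scale by simp
    moreover have "rscl a (x + rscl (\<epsilon> / a) p + rscl t (e - p)) = rscl a x + rscl \<epsilon> p + rscl (a * t) (e - p)"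
      using \<open>a > 0\<close> by (simp add: scale_right_distrib)
    ultimately show "\<exists>t>0. pos1 C (rscl a x + rscl \<epsilon> p + rscl t (e - p))"
      using \<open>t > 0\<close> \<open>a > 0\<close> by (metis mult_pos_pos)
  qed
qed

lemma C_p_order_unit:
  assumes "star x = x" obtains r where "rscl r p - x \<in> C_p"
proof -
  obtain r where "r > 0" "pos1 C (rscl r e + - x)"
    using pos1_order_unit[of "- x"] assms by (auto simp: star_minus)
  have "rscl r p - x \<in> C_p"
    unfolding C_p_iff
  proof (intro conjI allI impI)
    show "star (rscl r p - x) = rscl r p - x"
      using assms pos1_hermitian[OF pos1_p] by (simp add: star_diff star_rscl)
    fix \<epsilon> :: real assume "\<epsilon> > 0"
    have "pos1 C (rscl r e + - x + rscl \<epsilon> p)"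
      using \<open>pos1 C (rscl r e + - x)\<close> \<open>\<epsilon> > 0\<close> pos1_p by (simp add: pos1_add pos1_scale)
    moreover have "rscl r e + - x + rscl \<epsilon> p = rscl r p - x + rscl \<epsilon> p + rscl r (e - p)"
      by (simp add: scale_right_diff_distrib algebra_simps)
    ultimately show "\<exists>t>0. pos1 C (rscl r p - x + rscl \<epsilon> p + rscl t (e - p))"
      using \<open>r > 0\<close> by metis
  qed
  then show ?thesis by (rule that)
qed

lemma neg_complement_in_C_p: "- (e - p) \<in> C_p"
  unfolding C_p_iff
proof (intro conjI allI impI)
  show "star (- (e - p)) = - (e - p)"
    using pos1_hermitian[OF pos1_complement] star_minus[of "e - p"] by simp
  fix \<epsilon> :: real assume "\<epsilon> > 0"
  have "pos1 C (rscl \<epsilon> p + (e - p))"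
    using \<open>\<epsilon> > 0\<close> pos1_p pos1_complement by (simp add: pos1_add pos1_scale)
  moreover have "rscl \<epsilon> p + (e - p) = - (e - p) + rscl \<epsilon> p + rscl 2 (e - p)"
    using scale_left_distrib[of 1 1 "e - p"] by (simp add: algebra_simps)
  ultimately show "\<exists>t>0. pos1 C (- (e - p) + rscl \<epsilon> p + rscl t (e - p))"
    by (metis zero_less_numeral)
qed

lemma state_value_one_if_notin_J_p:
  assumes "p \<notin> J_p"
  obtains \<phi> where "is_state scl C e \<phi>" and "\<phi> p = 1"
proof -
  have "- p \<notin> C_p"
  proof
    assume "- p \<in> C_p"
    then have "p \<in> C_p \<inter> uminus ` C_p"
      using pos1_in_C_p[OF pos1_p] by (auto intro: image_eqI[of _ _ "- p"])
    then have "p \<in> J_p"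
      unfolding Jp_def by (rule span_base)
    with assms show False ..
  qed
  have "order_unit_cone rscl hermitian C_p p"
  proof (rule order_unit_cone_hermitianI)
    show "C_p \<subseteq> hermitian"
      unfolding Cp_def by blast
    show "\<exists>r. rscl r p - x \<in> C_p" if "star x = x" for x
      using C_p_order_unit[OF that] by blast
    show "star p = p"
      using pos1_hermitian[OF pos1_p] .
    show "- p \<notin> C_p" by fact
  qed (fact C_p_add C_p_scale)+
  moreover have "e - p \<in> C_p" "p - e \<in> C_p"
    using pos1_in_C_p[OF pos1_complement] neg_complement_in_C_p by simp_all
  ultimately show ?thesis
    using state_with_value_one pos1_in_C_p that by blast
qed

lemma
  assumes "is_state scl C e \<phi>"
  shows norm_state_p: "cmod (\<phi> p) = Re (\<phi> p)" and Re_state_p_le_one: "Re (\<phi> p) \<le> 1"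
proof -
  show "cmod (\<phi> p) = Re (\<phi> p)"
    using state_nonneg[OF assms pos1_p] by (metis abs_of_nonneg norm_of_real)
  have "\<phi> (e - p) = 1 - \<phi> p"
    using assms module_hom.diff[OF state_module_hom[OF assms]] unfolding is_state_def by simp
  then show "Re (\<phi> p) \<le> 1"
    using state_nonneg(2)[OF assms pos1_complement] by simp
qed

definition defect_dominated :: "'v set" where
  "defect_dominated = {y. \<forall>\<epsilon>>0. \<exists>M\<ge>0. \<forall>\<phi>. is_state scl C e \<phi> \<longrightarrow>
      cmod (\<phi> y) \<le> \<epsilon> + M * (1 - Re (\<phi> p))}"

lemma defect_dominated_add:
  assumes "x \<in> defect_dominated" "y \<in> defect_dominated"
  shows "x + y \<in> defect_dominated"
  unfolding defect_dominated_def
proof (intro CollectI allI impI)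
  fix \<epsilon> :: real assume "\<epsilon> > 0"
  then have "\<epsilon> / 2 > 0" by simp
  then obtain M N where "M \<ge> 0" "N \<ge> 0"
    and M: "\<And>\<phi>. is_state scl C e \<phi> \<Longrightarrow> cmod (\<phi> x) \<le> \<epsilon> / 2 + M * (1 - Re (\<phi> p))"
    and N: "\<And>\<phi>. is_state scl C e \<phi> \<Longrightarrow> cmod (\<phi> y) \<le> \<epsilon> / 2 + N * (1 - Re (\<phi> p))"
    using assms unfolding defect_dominated_def by blast
  show "\<exists>M\<ge>0. \<forall>\<phi>. is_state scl C e \<phi> \<longrightarrow> cmod (\<phi> (x + y)) \<le> \<epsilon> + M * (1 - Re (\<phi> p))"
  proof (intro exI[of _ "M + N"] conjI allI impI)
    fix \<phi> assume \<phi>: "is_state scl C e \<phi>"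
    have "cmod (\<phi> (x + y)) \<le> cmod (\<phi> x) + cmod (\<phi> y)"
      using module_hom.add[OF state_module_hom[OF \<phi>]] by (simp add: norm_triangle_ineq)
    moreover have "(M + N) * (1 - Re (\<phi> p)) = M * (1 - Re (\<phi> p)) + N * (1 - Re (\<phi> p))"
      by (rule distrib_right)
    ultimately show "cmod (\<phi> (x + y)) \<le> \<epsilon> + (M + N) * (1 - Re (\<phi> p))"
      using M[OF \<phi>] N[OF \<phi>] by linarith
  qed (use \<open>M \<ge> 0\<close> \<open>N \<ge> 0\<close> in simp)
qed

lemma defect_dominated_scale:
  assumes "x \<in> defect_dominated"
  shows "scl c x \<in> defect_dominated"
  unfolding defect_dominated_def
proof (intro CollectI allI impI)
  fix \<epsilon> :: real assume "\<epsilon> > 0"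
  then have "\<epsilon> / (cmod c + 1) > 0"
    by (simp add: add_nonneg_pos)
  then obtain M where "M \<ge> 0"
    and M: "\<And>\<phi>. is_state scl C e \<phi> \<Longrightarrow> cmod (\<phi> x) \<le> \<epsilon> / (cmod c + 1) + M * (1 - Re (\<phi> p))"
    using assms unfolding defect_dominated_def by blast
  show "\<exists>M\<ge>0. \<forall>\<phi>. is_state scl C e \<phi> \<longrightarrow> cmod (\<phi> (scl c x)) \<le> \<epsilon> + M * (1 - Re (\<phi> p))"
  proof (intro exI[of _ "cmod c * M"] conjI allI impI)
    fix \<phi> assume \<phi>: "is_state scl C e \<phi>"
    have "cmod (\<phi> (scl c x)) = cmod c * cmod (\<phi> x)"
      using module_hom.scale[OF state_module_hom[OF \<phi>]] by (simp add: norm_mult)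
    also have "\<dots> \<le> cmod c * (\<epsilon> / (cmod c + 1) + M * (1 - Re (\<phi> p)))"
      using M[OF \<phi>] by (simp add: mult_left_mono)
    also have "\<dots> \<le> \<epsilon> + cmod c * M * (1 - Re (\<phi> p))"
    proof -
      have "cmod c * (\<epsilon> / (cmod c + 1)) \<le> (cmod c + 1) * (\<epsilon> / (cmod c + 1))"
        using \<open>\<epsilon> / (cmod c + 1) > 0\<close> by (intro mult_right_mono) auto
      also have "\<dots> = \<epsilon>"
        using norm_ge_zero[of c] by (simp add: add_nonneg_eq_0_iff)
      finally show ?thesis
        by (simp add: algebra_simps)
    qed
    finally show "cmod (\<phi> (scl c x)) \<le> \<epsilon> + cmod c * M * (1 - Re (\<phi> p))" .
  qed (use \<open>M \<ge> 0\<close> in simp)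
qed

lemma subspace_defect_dominated: "subspace defect_dominated"
proof (rule subspaceI)
  show "0 \<in> defect_dominated"
    unfolding defect_dominated_def
  proof (intro CollectI allI impI exI[of _ 0] conjI)
    fix \<epsilon> :: real and \<phi> assume "\<epsilon> > 0" and \<phi>: "is_state scl C e \<phi>"
    then show "cmod (\<phi> 0) \<le> \<epsilon> + 0 * (1 - Re (\<phi> p))"
      using module_hom.zero[OF state_module_hom[OF \<phi>]] by simp
  qed simp
qed (fact defect_dominated_add defect_dominated_scale)+

lemma C_p_state_lower_bound:
  assumes "x \<in> C_p" "\<epsilon> > 0"
  obtains t where "t \<ge> 0"
    and "\<And>\<phi>. is_state scl C e \<phi> \<Longrightarrow> - (\<epsilon> + t * (1 - Re (\<phi> p))) \<le> Re (\<phi> x)"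
proof -
  obtain t where "t > 0" and pos: "pos1 C (x + rscl \<epsilon> p + rscl t (e - p))"
    using assms unfolding C_p_iff by blast
  have lower: "- (\<epsilon> + t * (1 - Re (\<phi> p))) \<le> Re (\<phi> x)" if \<phi>: "is_state scl C e \<phi>" for \<phi>
  proof -
    interpret \<phi>: module_hom scl "(*)" \<phi>
      using state_module_hom[OF \<phi>] .
    have "0 \<le> Re (\<phi> (x + rscl \<epsilon> p + rscl t (e - p)))"
      using state_nonneg(2)[OF \<phi> pos] .
    also have "\<dots> = Re (\<phi> x) + \<epsilon> * Re (\<phi> p) + t * (1 - Re (\<phi> p))"
      using \<phi> unfolding is_state_def by (simp add: \<phi>.add \<phi>.scale \<phi>.diff)
    finally show ?thesis
      using Re_state_p_le_one[OF \<phi>] \<open>\<epsilon> > 0\<close> mult_left_le[of "Re (\<phi> p)" \<epsilon>] by linarith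
  qed
  show ?thesis
    by (rule that[of t]) (use \<open>t > 0\<close> lower in auto)
qed

lemma symmetric_part_of_C_p_dominated: "C_p \<inter> uminus ` C_p \<subseteq> defect_dominated"
proof
  fix x assume "x \<in> C_p \<inter> uminus ` C_p"
  then have "x \<in> C_p" "- x \<in> C_p"
    by auto
  then have "star x = x"
    by (simp add: C_p_iff)
  show "x \<in> defect_dominated"
    unfolding defect_dominated_def
  proof (intro CollectI allI impI)
    fix \<epsilon> :: real assume "\<epsilon> > 0"
    obtain s t where "s \<ge> 0" "t \<ge> 0"
      and s: "\<And>\<phi>. is_state scl C e \<phi> \<Longrightarrow> - (\<epsilon> + s * (1 - Re (\<phi> p))) \<le> Re (\<phi> x)"
      and t: "\<And>\<phi>. is_state scl C e \<phi> \<Longrightarrow> - (\<epsilon> + t * (1 - Re (\<phi> p))) \<le> Re (\<phi> (- x))"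
      using C_p_state_lower_bound[OF \<open>x \<in> C_p\<close> \<open>\<epsilon> > 0\<close>]
        C_p_state_lower_bound[OF \<open>- x \<in> C_p\<close> \<open>\<epsilon> > 0\<close>] by metis
    show "\<exists>M\<ge>0. \<forall>\<phi>. is_state scl C e \<phi> \<longrightarrow> cmod (\<phi> x) \<le> \<epsilon> + M * (1 - Re (\<phi> p))"
    proof (intro exI[of _ "s + t"] conjI allI impI)
      fix \<phi> assume \<phi>: "is_state scl C e \<phi>"
      have "cmod (\<phi> x) = \<bar>Re (\<phi> x)\<bar>"
        by (subst state_hermitian_real[OF \<phi> \<open>star x = x\<close>]) simp
      moreover have "Re (\<phi> (- x)) = - Re (\<phi> x)"
        using module_hom.neg[OF state_module_hom[OF \<phi>]] by simp
      moreover have "s * (1 - Re (\<phi> p)) \<le> (s + t) * (1 - Re (\<phi> p))"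
        "t * (1 - Re (\<phi> p)) \<le> (s + t) * (1 - Re (\<phi> p))"
        using Re_state_p_le_one[OF \<phi>] \<open>s \<ge> 0\<close> \<open>t \<ge> 0\<close> by (simp_all add: mult_right_mono)
      ultimately show "cmod (\<phi> x) \<le> \<epsilon> + (s + t) * (1 - Re (\<phi> p))"
        using s[OF \<phi>] t[OF \<phi>] by linarith
    qed (use \<open>s \<ge> 0\<close> \<open>t \<ge> 0\<close> in simp)
  qed
qed

lemma J_p_subset_defect_dominated: "J_p \<subseteq> defect_dominated"
  unfolding Jp_def
  using symmetric_part_of_C_p_dominated subspace_defect_dominated by (rule span_minimal)

lemma alpha_m_less_one_if_dominated:
  assumes "e \<noteq> 0" and "p \<in> defect_dominated"
  shows "alpha_m scl C e p < 1"
proof -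
  have "(1 / 2 :: real) > 0" by simp
  then obtain M where "M \<ge> 0"
    and M: "\<And>\<phi>. is_state scl C e \<phi> \<Longrightarrow> cmod (\<phi> p) \<le> 1 / 2 + M * (1 - Re (\<phi> p))"
    using assms(2) unfolding defect_dominated_def by blast
  have bound: "cmod (\<phi> p) \<le> (M + 1 / 2) / (M + 1)" if \<phi>: "is_state scl C e \<phi>" for \<phi>
  proof -
    from M[OF \<phi>] norm_state_p[OF \<phi>] have "cmod (\<phi> p) * (M + 1) \<le> M + 1 / 2"
      by (simp add: algebra_simps)
    with \<open>M \<ge> 0\<close> show ?thesis
      by (simp add: pos_le_divide_eq)
  qed
  obtain \<phi> where "is_state scl C e \<phi>"
    using state_exists[OF assms(1)] .
  then have "alpha_m scl C e p \<le> (M + 1 / 2) / (M + 1)"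
    unfolding alpha_m_def using bound by (intro cSup_least) auto
  also have "\<dots> < 1"
    using \<open>M \<ge> 0\<close> by (simp add: divide_less_eq)
  finally show ?thesis .
qed

lemma alpha_m_eq_one_if_state_at_one:
  assumes "is_state scl C e \<phi>" and "\<phi> p = 1"
  shows "alpha_m scl C e p = 1"
  unfolding alpha_m_def
proof (rule cSup_eq_maximum)
  show "1 \<in> {cmod (\<phi> p) | \<phi>. is_state scl C e \<phi>}"
    using assms by force
  show "y \<le> 1" if "y \<in> {cmod (\<phi> p) | \<phi>. is_state scl C e \<phi>}" for y
    using that norm_state_p Re_state_p_le_one by auto
qed

end

theorem proposition4p8:
  fixes scl :: "complex \<Rightarrow> 'v::ab_group_add \<Rightarrow> 'v"
    and star :: "'v \<Rightarrow> 'v"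
    and C :: "nat \<Rightarrow> (nat \<Rightarrow> nat \<Rightarrow> 'v) set"
    and e p :: 'v
  assumes "operator_system scl star C e"
    and "pos1 C p" and "pos1 C (e - p)" and "p \<noteq> 0"
  shows "alpha_m scl C e p = 1 \<longleftrightarrow> p \<notin> Jp scl star C e p"
proof -
  interpret order_unit_star_space scl star C e
    using operator_system_order_unit_star_space[OF assms(1)] .
  interpret positive_contraction scl star C e p
    by unfold_locales (fact assms(2,3))+
  have "e \<noteq> 0"
    using assms(2-4) pos1_antisym by force
  show ?thesis
  proof
    assume "alpha_m scl C e p = 1"
    then show "p \<notin> J_p"
      using alpha_m_less_one_if_dominated[OF \<open>e \<noteq> 0\<close>] J_p_subset_defect_dominated by auto
  next
    assume "p \<notin> J_p"
    then show "alpha_m scl C e p = 1"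
      using state_value_one_if_notin_J_p alpha_m_eq_one_if_state_at_one by metis
  qed
qed

end
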